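(* Let $V\subset V'$ be an immediate extension of valuation rings, $K,K'$ their fraction fields, $\mathfrak m,\mathfrak m'$ their maximal ideals, $y_0\in V'$ and $y_1=y_0^2$. Assume $K'=K(y_0)$ and that for $e=0,1$, $y_e$ is a pseudo limit of a pseudo convergent sequence $v_e=(v_{e,j})_{j<\lambda_e}$ over $V$ which has no pseudo limit in $K$; set $y_{e,j}=(y_e-v_{e,j})/(v_{e,j+1}-v_{e,j})$. Then for every polynomial $g\in V[Y_0,Y_1]$ with $\deg_{Y_i}g\le1$ ($i=0,1$) and all ordinals $\nu_0<\lambda_0$, $\nu_1<\lambda_1$, there exist $\nu_0<j_0<\lambda_0$, $\nu_1<j_1<\lambda_1$, $c\in V\setminus\{0\}$ and a polynomial $g_1\in V[Y_{0,j_0},Y_{1,j_1}]$ such that $g(y_0,y_1)=c\,g_1(y_{0,j_0},y_{1,j_1})$, $g_1\notin\mathfrak m V[Y_{0,j_0},Y_{1,j_1}]$, and the values of the coefficients of all monomials of $g_1-g_1(0,0)$ are pairwise different.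
   Context: Let $\mathrm{val}$ denote the valuation of $V'$. For a limit ordinal $\lambda$, a sequence $(v_j)_{j<\lambda}$ in $V$ is pseudo convergent if $\mathrm{val}(v_i-v_{i''})<\mathrm{val}(v_{i'}-v_{i''})$ for all $i<i'<i''<\lambda$; $w$ is a pseudo limit if $\mathrm{val}(w-v_i)<\mathrm{val}(w-v_{i'})$ for all $i<i'<\lambda$. An extension of valuation rings is immediate if the induced residue field and value group extensions are equalities. *)

theory Defs
  imports "HOL-Computational_Algebra.Polynomial"
begin

definition subring :: "'k::field set \<Rightarrow> bool" where
  "subring R \<longleftrightarrow> 0 \<in> R \<and> 1 \<in> R \<and> (\<forall>x\<in>R. \<forall>y\<in>R. x + y \<in> R \<and> x - y \<in> R \<and> x * y \<in> R)"

definition subfield :: "'k::field set \<Rightarrow> bool" where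
  "subfield F \<longleftrightarrow> subring F \<and> (\<forall>x\<in>F. inverse x \<in> F)"

definition gen_field :: "'k::field set \<Rightarrow> 'k set" where
  "gen_field A = \<Inter>{F. subfield F \<and> A \<subseteq> F}"

definition frac :: "'k::field set \<Rightarrow> 'k set" where
  "frac R = {a / b | a b. a \<in> R \<and> b \<in> R \<and> b \<noteq> 0}"

definition valuation_ring_in :: "'k::field set \<Rightarrow> 'k set \<Rightarrow> bool" where
  "valuation_ring_in R F \<longleftrightarrow> subring R \<and> R \<subseteq> F \<and>
     (\<forall>x\<in>F. x \<noteq> 0 \<longrightarrow> x \<in> R \<or> inverse x \<in> R)"

definition units_of_ring :: "'k::field set \<Rightarrow> 'k set" where
  "units_of_ring R = {x \<in> R. x \<noteq> 0 \<and> inverse x \<in> R}"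

definition maxideal :: "'k::field set \<Rightarrow> 'k set" where
  "maxideal R = R - units_of_ring R"

text \<open>val_le R a b  means  val(a) \<le> val(b)  (with val 0 = \<infinity>), i.e. a divides b in R.\<close>
definition val_le :: "'k::field set \<Rightarrow> 'k \<Rightarrow> 'k \<Rightarrow> bool" where
  "val_le R a b \<longleftrightarrow> (if a = 0 then b = 0 else b / a \<in> R)"

definition val_lt :: "'k::field set \<Rightarrow> 'k \<Rightarrow> 'k \<Rightarrow> bool" where
  "val_lt R a b \<longleftrightarrow> val_le R a b \<and> \<not> val_le R b a"

definition val_eq :: "'k::field set \<Rightarrow> 'k \<Rightarrow> 'k \<Rightarrow> bool" where
  "val_eq R a b \<longleftrightarrow> val_le R a b \<and> val_le R b a"

text \<open>V \<subseteq> V' valuation rings with fraction fields frac V \<subseteq> frac V'; immediate: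
  residue fields equal and value groups equal.\<close>
definition immediate_ext :: "'k::field set \<Rightarrow> 'k set \<Rightarrow> bool" where
  "immediate_ext V V' \<longleftrightarrow>
     (\<forall>x\<in>V'. \<exists>v\<in>V. x - v \<in> maxideal V') \<and>
     (\<forall>x\<in>frac V'. x \<noteq> 0 \<longrightarrow> (\<exists>a\<in>frac V. a \<noteq> 0 \<and> val_eq V' x a))"

text \<open>A limit ordinal \<lambda> is rendered as a well-ordered index type without a greatest
  element; j+1 is the successor of j.\<close>
definition no_max :: "'i::wellorder itself \<Rightarrow> bool" where
  "no_max _ \<longleftrightarrow> (\<forall>i::'i. \<exists>j. i < j)"

definition succ_ord :: "'i::wellorder \<Rightarrow> 'i" where
  "succ_ord j = (LEAST k. j < k)"

definition pseudo_convergent :: "'k::field set \<Rightarrow> ('i::wellorder \<Rightarrow> 'k) \<Rightarrow> bool" where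
  "pseudo_convergent R v \<longleftrightarrow>
     (\<forall>i i' i''. i < i' \<and> i' < i'' \<longrightarrow> val_lt R (v i - v i'') (v i' - v i''))"

definition pseudo_limit :: "'k::field set \<Rightarrow> ('i::wellorder \<Rightarrow> 'k) \<Rightarrow> 'k \<Rightarrow> bool" where
  "pseudo_limit R v w \<longleftrightarrow> (\<forall>i i'. i < i' \<longrightarrow> val_lt R (w - v i) (w - v i'))"

section \<open>Bivariate polynomials as 'k poly poly (inner variable first, outer second)\<close>

definition coeff2 :: "'k::comm_ring_1 poly poly \<Rightarrow> nat \<Rightarrow> nat \<Rightarrow> 'k" where
  "coeff2 p i j = coeff (coeff p j) i"

definition eval2 :: "'k::comm_ring_1 poly poly \<Rightarrow> 'k \<Rightarrow> 'k \<Rightarrow> 'k" where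
  "eval2 p x y = poly (poly p [:y:]) x"

end

theory Submission
  imports Defs
begin

text \<open>Write gap_e j = v_{e,j+1} - v_{e,j}. Substituting y_e = v_{e,j_e} + gap_e j_e * y_{e,j_e} into
  g = a + b Y0 + c Y1 + d Y0 Y1 gives a polynomial in y_{0,j0}, y_{1,j1} whose non-constant
  coefficients are (b + d v_{1,j1}) gap_0 j0, (c + d v_{0,j0}) gap_1 j1 and d gap_0 j0 gap_1 j1.
  The values of the gaps strictly increase with the index, while b + d v_{1,j} and c + d v_{0,j}
  eventually have constant value because -b/d and -c/d are no pseudo limits; so suitable late
  indices make the values of these coefficients pairwise different, and dividing by a
  coefficient of minimal value yields g1. For g = 0 the relation y0^2 - y1 = 0 is expanded
  instead.\<close>

locale ambient_valuation_ring =
  fixes R :: "'k::field set"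
  assumes valuation_ring: "valuation_ring_in R UNIV"
begin

lemma R_zero: "0 \<in> R" and R_one: "1 \<in> R"
  and R_add: "x \<in> R \<Longrightarrow> y \<in> R \<Longrightarrow> x + y \<in> R"
  and R_diff: "x \<in> R \<Longrightarrow> y \<in> R \<Longrightarrow> x - y \<in> R"
  and R_mult: "x \<in> R \<Longrightarrow> y \<in> R \<Longrightarrow> x * y \<in> R"
  and R_or_inverse: "x \<noteq> 0 \<Longrightarrow> x \<in> R \<or> inverse x \<in> R"
  using valuation_ring unfolding valuation_ring_in_def subring_def by auto

lemma R_uminus_iff [simp]: "- x \<in> R \<longleftrightarrow> x \<in> R"
  using R_diff[OF R_zero, of x] R_diff[OF R_zero, of "- x"] by auto

lemma val_le_total: "val_le R a b \<or> val_le R b a"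
  using R_or_inverse[of "b / a"] R_zero by (auto simp: val_le_def inverse_eq_divide)

lemma val_le_refl [simp]: "val_le R a a"
  using R_one by (simp add: val_le_def)

lemma val_le_trans: "val_le R a b \<Longrightarrow> val_le R b c \<Longrightarrow> val_le R a c"
proof (cases "a = 0 \<or> b = 0")
  case False
  then have "c / a = (c / b) * (b / a)" by simp
  then show "val_le R a b \<Longrightarrow> val_le R b c \<Longrightarrow> val_le R a c"
    using False R_mult[of "c / b" "b / a"] by (auto simp: val_le_def)
qed (auto simp: val_le_def R_zero)

lemma val_le_add: "val_le R a b \<Longrightarrow> val_le R a c \<Longrightarrow> val_le R a (b + c)"
  using R_add by (auto simp: val_le_def add_divide_distrib)

lemma val_le_diff: "val_le R a b \<Longrightarrow> val_le R a c \<Longrightarrow> val_le R a (b - c)"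
  using R_diff by (auto simp: val_le_def diff_divide_distrib)

lemma val_le_uminus [simp]: "val_le R (- a) b \<longleftrightarrow> val_le R a b" "val_le R a (- b) \<longleftrightarrow> val_le R a b"
  by (auto simp: val_le_def)

lemma val_le_mult_cancel: "z \<noteq> 0 \<Longrightarrow> val_le R (z * a) (z * b) \<longleftrightarrow> val_le R a b"
  by (auto simp: val_le_def)

lemma val_lt_iff_not_le: "val_lt R a b \<longleftrightarrow> \<not> val_le R b a"
  using val_le_total by (auto simp: val_lt_def)

lemma val_eq_refl [simp]: "val_eq R a a"
  by (simp add: val_eq_def)

lemma val_eq_sym: "val_eq R a b \<Longrightarrow> val_eq R b a"
  by (simp add: val_eq_def)

lemma val_eq_trans: "val_eq R a b \<Longrightarrow> val_eq R b c \<Longrightarrow> val_eq R a c"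
  using val_le_trans by (auto simp: val_eq_def)

lemma val_lt_trans: "val_lt R a b \<Longrightarrow> val_lt R b c \<Longrightarrow> val_lt R a c"
  and val_lt_le_trans: "val_lt R a b \<Longrightarrow> val_le R b c \<Longrightarrow> val_lt R a c"
  and val_eq_lt_trans: "val_eq R a b \<Longrightarrow> val_lt R b c \<Longrightarrow> val_lt R a c"
  and val_lt_eq_trans: "val_lt R a b \<Longrightarrow> val_eq R b c \<Longrightarrow> val_lt R a c"
  using val_le_trans by (auto simp: val_lt_def val_eq_def)

lemma val_lt_imp_not_eq: "val_lt R a b \<Longrightarrow> \<not> val_eq R a b"
  by (auto simp: val_eq_def val_lt_def)

lemma val_lt_imp_nonzero: "val_lt R a b \<Longrightarrow> a \<noteq> 0"
  by (auto simp: val_lt_def val_le_def R_zero)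

lemma val_eq_uminus [simp]: "val_eq R (- a) b \<longleftrightarrow> val_eq R a b" "val_eq R a (- b) \<longleftrightarrow> val_eq R a b"
  by (auto simp: val_eq_def)

lemma val_lt_uminus [simp]: "val_lt R (- a) b \<longleftrightarrow> val_lt R a b" "val_lt R a (- b) \<longleftrightarrow> val_lt R a b"
  by (auto simp: val_lt_def)

lemma val_lt_minus_commute: "val_lt R (a - b) c \<longleftrightarrow> val_lt R (b - a) c"
  and val_lt_minus_commute_right: "val_lt R c (a - b) \<longleftrightarrow> val_lt R c (b - a)"
  using val_lt_uminus(1)[of "b - a"] val_lt_uminus(2)[of c "b - a"]
  by simp_all

lemma val_eq_mult_cancel: "z \<noteq> 0 \<Longrightarrow> val_eq R (z * a) (z * b) \<longleftrightarrow> val_eq R a b"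
  and val_lt_mult_cancel: "z \<noteq> 0 \<Longrightarrow> val_lt R (z * a) (z * b) \<longleftrightarrow> val_lt R a b"
  using val_le_mult_cancel by (auto simp: val_eq_def val_lt_def)

lemma val_eq_divide_cancel: "z \<noteq> 0 \<Longrightarrow> val_eq R (a / z) (b / z) \<longleftrightarrow> val_eq R a b"
  by (auto simp: val_eq_def val_le_def)

lemma val_eq_mult_left: "val_eq R a b \<Longrightarrow> val_eq R (z * a) (z * b)"
  using val_eq_mult_cancel[of z a b] by (cases "z = 0") auto

lemma val_eq_add_if_lt: "val_lt R x y \<Longrightarrow> val_eq R (x + y) x"
proof -
  assume "val_lt R x y"
  then have xy: "val_le R x y" and yx: "\<not> val_le R y x" by (auto simp: val_lt_def)
  have "val_le R (x + y) x"
  proof (rule ccontr)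
    assume "\<not> val_le R (x + y) x"
    then have "\<not> val_le R (x + y) y"
      using val_le_diff[OF _ val_le_refl, of "x + y" y] by auto
    then have "val_le R y (x + y)"
      using val_le_total by blast
    from val_le_diff[OF this val_le_refl] have "val_le R y x" by simp
    with yx show False ..
  qed
  then show ?thesis using val_le_add[OF val_le_refl xy] by (simp add: val_eq_def)
qed

lemma val_lt_affine:
  assumes "d \<noteq> 0" "val_lt R (- b / d - x) g"
  shows "val_lt R (b + d * x) (d * g)"
proof -
  have "b + d * x = - (d * (- b / d - x))" using assms(1) by (simp add: field_simps)
  then show ?thesis using assms val_lt_mult_cancel[of d] by simp
qed

lemma val_eq_affine:
  assumes "d \<noteq> 0" "val_eq R (- b / d - x) (- b / d - x')"
  shows "val_eq R (b + d * x) (b + d * x')"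
proof -
  have "b + d * z = - (d * (- b / d - z))" for z using assms(1) by (simp add: field_simps)
  then show ?thesis using assms val_eq_mult_cancel[of d] by simp
qed

lemma exists_min_val:
  assumes "finite A" "A \<noteq> {}"
  shows "\<exists>m\<in>A. \<forall>x\<in>A. val_le R m x"
  using assms
proof (induction A rule: finite_ne_induct)
  case (insert a A)
  then obtain m where m: "m \<in> A" "\<forall>x\<in>A. val_le R m x" by blast
  show ?case
  proof (cases "val_le R a m")
    case True
    then have "\<forall>x\<in>insert a A. val_le R a x" using m(2) val_le_trans[of a m] by auto
    then show ?thesis by blast
  next
    case False
    then have "\<forall>x\<in>insert a A. val_le R m x" using m(2) val_le_total[of a m] by auto
    then show ?thesis using m(1) by blast
  qed
qed simp


lemma exists_index_avoiding_vals:
  fixes f :: "'i::wellorder \<Rightarrow> 'k"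
  assumes "no_max TYPE('i)" and f_strict: "\<And>j k. j < k \<Longrightarrow> val_lt R (f j) (f k)"
  shows "\<exists>j. \<nu> < j \<and> (\<forall>x\<in>set xs. \<not> val_eq R (f j) x)"
proof (induction xs arbitrary: \<nu>)
  case Nil
  show ?case using assms(1) unfolding no_max_def by auto
next
  case (Cons x xs)
  obtain j where j: "\<nu> < j" "\<forall>y\<in>set xs. \<not> val_eq R (f j) y" using Cons by blast
  obtain k where k: "j < k" "\<forall>y\<in>set xs. \<not> val_eq R (f k) y" using Cons by blast
  have "\<not> val_eq R (f j) x \<or> \<not> val_eq R (f k) x"
    using val_lt_imp_not_eq[OF f_strict[OF k(1)]] val_eq_trans val_eq_sym by blast
  then show ?case
    using j k less_trans[OF j(1) k(1)] by auto
qed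

end

lemma succ_ord_gt: "no_max TYPE('i::wellorder) \<Longrightarrow> (j::'i) < succ_ord j"
  unfolding no_max_def succ_ord_def by (meson LeastI_ex)

lemma succ_ord_le: "(j::'i::wellorder) < k \<Longrightarrow> succ_ord j \<le> k"
  unfolding succ_ord_def by (rule Least_le)

locale pseudo_convergent_seq = ambient_valuation_ring R
  for R :: "'k::field set" +
  fixes v :: "'i::wellorder \<Rightarrow> 'k"
  assumes no_max: "no_max TYPE('i)"
    and pseudo_convergent: "pseudo_convergent R v"
begin

lemma pseudo_convergentD: "i < i' \<Longrightarrow> i' < i'' \<Longrightarrow> val_lt R (v i - v i'') (v i' - v i'')"
  using pseudo_convergent unfolding pseudo_convergent_def by blast

abbreviation gap :: "'i \<Rightarrow> 'k" where
  "gap j \<equiv> v (succ_ord j) - v j"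

lemma val_diff_eq_gap:
  assumes "i < k"
  shows "val_eq R (v k - v i) (gap i)"
proof (cases "k = succ_ord i")
  case False
  with succ_ord_le[OF assms] have "succ_ord i < k" by simp
  with succ_ord_gt[OF no_max] have "val_lt R (v i - v k) (v (succ_ord i) - v k)"
    by (rule pseudo_convergentD)
  then have "val_lt R (v k - v i) (v (succ_ord i) - v k)"
    using val_lt_uminus(1)[of "v k - v i"] by simp
  from val_eq_sym[OF val_eq_add_if_lt[OF this]] show ?thesis
    by simp
qed simp

lemma val_gap_strict_mono:
  assumes "i < k"
  shows "val_lt R (gap i) (gap k)"
proof -
  have k: "k < succ_ord k" by (rule succ_ord_gt[OF no_max])
  have "val_lt R (v i - v (succ_ord k)) (v k - v (succ_ord k))"
    using assms k by (rule pseudo_convergentD)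
  then have "val_lt R (v (succ_ord k) - v i) (gap k)"
    by (simp add: val_lt_minus_commute val_lt_minus_commute_right[of _ "v k"])
  moreover have "val_eq R (v (succ_ord k) - v i) (gap i)"
    using assms k by (intro val_diff_eq_gap) simp
  ultimately show ?thesis
    using val_eq_lt_trans val_eq_sym by blast
qed

lemma gap_nonzero: "gap j \<noteq> 0"
  using val_lt_imp_nonzero[OF val_gap_strict_mono[OF succ_ord_gt[OF no_max]]] .

lemma exists_val_below_gap:
  assumes "\<not> pseudo_limit R v w"
  shows "\<exists>m. val_lt R (w - v m) (gap m)"
proof (rule ccontr)
  assume "\<nexists>m. val_lt R (w - v m) (gap m)"
  then have gap_le: "val_le R (gap m) (w - v m)" for m
    by (simp add: val_lt_iff_not_le)
  from assms obtain i k where ik: "i < k" "\<not> val_lt R (w - v i) (w - v k)"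
    unfolding pseudo_limit_def by blast
  have below: "val_lt R (gap i) (w - v k)"
    using val_gap_strict_mono[OF ik(1)] gap_le[of k] by (rule val_lt_le_trans)
  have diff: "val_eq R (v k - v i) (gap i)"
    using ik(1) by (rule val_diff_eq_gap)
  have "val_lt R (v k - v i) (w - v k)"
    using diff below by (rule val_eq_lt_trans)
  from val_eq_add_if_lt[OF this] have "val_eq R (w - v i) (v k - v i)"
    by simp
  then have "val_lt R (w - v i) (w - v k)"
    using diff below val_eq_trans val_eq_lt_trans by blast
  with ik(2) show False ..
qed

lemma val_stable_beyond:
  assumes m: "val_lt R (w - v m) (gap m)" and "m \<le> k"
  shows "val_eq R (w - v k) (w - v m) \<and> val_lt R (w - v k) (gap k)"
proof (cases "m = k")
  case False
  with \<open>m \<le> k\<close> have mk: "m < k" by simp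
  have "val_lt R (w - v m) (v k - v m)"
    using m val_diff_eq_gap[OF mk] val_lt_eq_trans val_eq_sym by blast
  then have "val_lt R (w - v m) (v m - v k)"
    by (simp add: val_lt_minus_commute_right)
  from val_eq_add_if_lt[OF this] have stable: "val_eq R (w - v k) (w - v m)"
    by simp
  moreover have "val_lt R (w - v k) (gap k)"
    using val_eq_lt_trans[OF stable val_lt_trans[OF m val_gap_strict_mono[OF mk]]] .
  ultimately show ?thesis ..
qed (use m in simp)

end

definition bipoly :: "'a::comm_ring_1 \<Rightarrow> 'a \<Rightarrow> 'a \<Rightarrow> 'a \<Rightarrow> 'a \<Rightarrow> 'a poly poly" where
  "bipoly a b c d e = [: [:a, b, e:], [:c, d:] :]"

lemma coeff2_bipoly:
  "coeff2 (bipoly a b c d e) i j =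
     (if j = 0 then (if i = 0 then a else if i = 1 then b else if i = 2 then e else 0)
      else if j = 1 then (if i = 0 then c else if i = 1 then d else 0) else 0)"
  unfolding bipoly_def coeff2_def by (simp add: coeff_pCons split: nat.split)

lemma eval2_bipoly: "eval2 (bipoly a b c d e) x y = a + b * x + c * y + d * x * y + e * x ^ 2"
  unfolding bipoly_def eval2_def by (simp add: algebra_simps power2_eq_square)

lemma poly_eq_linear: "degree p \<le> 1 \<Longrightarrow> p = [:coeff p 0, coeff p 1:]"
  by (rule poly_eqI) (auto simp: coeff_pCons coeff_eq_0 split: nat.splits)

lemma bipoly_if_bidegree_le_1:
  assumes "degree g \<le> 1" "\<forall>j. degree (coeff g j) \<le> 1"
  shows "g = bipoly (coeff2 g 0 0) (coeff2 g 1 0) (coeff2 g 0 1) (coeff2 g 1 1) 0"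
  using poly_eq_linear[OF assms(1)] poly_eq_linear[of "coeff g 0"] poly_eq_linear[of "coeff g 1"] assms(2)
  by (simp add: bipoly_def coeff2_def)

lemma eval2_substitute_bilinear:
  fixes p q r t :: "'k::field"
  assumes "q \<noteq> 0" "t \<noteq> 0"
  shows "a + b * y + c * z + d * y * z =
    eval2 (bipoly (a + b * p + c * r + d * p * r) ((b + d * r) * q) ((c + d * p) * t) (d * q * t) 0)
      ((y - p) / q) ((z - r) / t)"
  using assms by (simp add: eval2_bipoly field_simps)

text \<open>The relation y^2 - Y = 0 in the substituted variables.\<close>
lemma eval2_substitute_square:
  fixes p q r t :: "'k::field"
  assumes "q \<noteq> 0" "t \<noteq> 0"
  shows "eval2 (bipoly (p ^ 2 - r) (2 * p * q) (- t) 0 (q ^ 2)) ((y - p) / q) ((y ^ 2 - r) / t) = 0"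
  using assms by (simp add: eval2_bipoly field_simps power2_eq_square)

definition distinct_monomial_vals :: "'k::field set \<Rightarrow> 'k poly poly \<Rightarrow> bool" where
  "distinct_monomial_vals R g \<longleftrightarrow>
     (\<forall>i j i' j'. (i, j) \<noteq> (0, 0) \<and> (i', j') \<noteq> (0, 0) \<and> (i, j) \<noteq> (i', j') \<and>
        coeff2 g i j \<noteq> 0 \<and> coeff2 g i' j' \<noteq> 0 \<longrightarrow> \<not> val_eq R (coeff2 g i j) (coeff2 g i' j'))"

lemma coeff2_smult_const: "coeff2 (smult [:k:] g) i j = k * coeff2 g i j"
  by (simp add: coeff2_def)

lemma eval2_smult_const: "eval2 (smult [:k:] g) x y = k * eval2 g x y"
  by (simp add: eval2_def)

lemma finite_coeff2_range: "finite (range (\<lambda>(i, j). coeff2 g i j))"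
proof (rule finite_subset)
  show "range (\<lambda>(i, j). coeff2 g i j) \<subseteq> (\<Union>q \<in> range (coeff g). range (coeff q))"
    by (auto simp: coeff2_def)
  show "finite (\<Union>q \<in> range (coeff g). range (coeff q))"
    by (simp add: range_coeff)
qed

context ambient_valuation_ring
begin

lemma distinct_monomial_vals_bipoly:
  assumes "B \<noteq> 0 \<Longrightarrow> C \<noteq> 0 \<Longrightarrow> \<not> val_eq R B C"
    and "B \<noteq> 0 \<Longrightarrow> D \<noteq> 0 \<Longrightarrow> \<not> val_eq R B D"
    and "B \<noteq> 0 \<Longrightarrow> E \<noteq> 0 \<Longrightarrow> \<not> val_eq R B E"
    and "C \<noteq> 0 \<Longrightarrow> D \<noteq> 0 \<Longrightarrow> \<not> val_eq R C D"
    and "C \<noteq> 0 \<Longrightarrow> E \<noteq> 0 \<Longrightarrow> \<not> val_eq R C E"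
    and "D \<noteq> 0 \<Longrightarrow> E \<noteq> 0 \<Longrightarrow> \<not> val_eq R D E"
  shows "distinct_monomial_vals R (bipoly A B C D E)"
  unfolding distinct_monomial_vals_def
proof (intro allI impI)
  fix i j i' j'
  assume ij: "(i, j) \<noteq> (0, 0) \<and> (i', j') \<noteq> (0, 0) \<and> (i, j) \<noteq> (i', j') \<and>
    coeff2 (bipoly A B C D E) i j \<noteq> 0 \<and> coeff2 (bipoly A B C D E) i' j' \<noteq> 0"
  have pos: "(i, j) \<in> {(1, 0), (2, 0), (0, 1), (1, 1)}" "(i', j') \<in> {(1, 0), (2, 0), (0, 1), (1, 1)}"
    using ij by (auto simp: coeff2_bipoly split: if_splits)
  have swap: "y \<noteq> 0 \<Longrightarrow> x \<noteq> 0 \<Longrightarrow> \<not> val_eq R y x"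
    if "x \<noteq> 0 \<Longrightarrow> y \<noteq> 0 \<Longrightarrow> \<not> val_eq R x y" for x y
    using that val_eq_sym by blast
  show "\<not> val_eq R (coeff2 (bipoly A B C D E) i j) (coeff2 (bipoly A B C D E) i' j')"
    using pos ij assms swap[OF assms(1)] swap[OF assms(2)] swap[OF assms(3)] swap[OF assms(4)]
      swap[OF assms(5)] swap[OF assms(6)]
    by (auto simp: coeff2_bipoly)
qed

lemma normalize_by_min_coeff:
  assumes "subring V" and "R \<inter> frac V = V"
    and coeffs_V: "\<forall>i j. coeff2 h i j \<in> V" and "coeff2 h i0 j0 \<noteq> 0"
    and distinct: "distinct_monomial_vals R h"
  obtains c g1 where "c \<in> V" "c \<noteq> 0" "\<forall>i j. coeff2 g1 i j \<in> V" "h = smult [:c:] g1"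
    "\<exists>i j. coeff2 g1 i j \<notin> maxideal V" "distinct_monomial_vals R g1"
proof -
  let ?S = "range (\<lambda>(i, j). coeff2 h i j) - {0}"
  obtain c where c: "c \<in> ?S" "\<forall>x\<in>?S. val_le R c x"
    using exists_min_val[of ?S] finite_coeff2_range assms(4) by blast
  then obtain i1 j1 where c_coeff: "c = coeff2 h i1 j1" and "c \<noteq> 0" by auto
  then have "c \<in> V" using coeffs_V by simp
  define g1 where "g1 = smult [:inverse c:] h"
  have coeff_g1: "coeff2 g1 i j = coeff2 h i j / c" for i j
    by (simp add: g1_def coeff2_smult_const field_simps)
  have "coeff2 g1 i j \<in> V" for i j
  proof (cases "coeff2 h i j = 0")
    case False
    then have "coeff2 h i j / c \<in> R" using c(2) \<open>c \<noteq> 0\<close> by (auto simp: val_le_def)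
    moreover have "coeff2 h i j / c \<in> frac V"
      using coeffs_V \<open>c \<in> V\<close> \<open>c \<noteq> 0\<close> unfolding frac_def by blast
    ultimately show ?thesis unfolding coeff_g1 using assms(2) by blast
  qed (use assms(1) coeff_g1 in \<open>simp add: subring_def\<close>)
  moreover have "h = smult [:c:] g1"
    using \<open>c \<noteq> 0\<close> by (simp add: g1_def pCons_one)
  moreover have "coeff2 g1 i1 j1 \<notin> maxideal V"
    using assms(1) \<open>c \<noteq> 0\<close> c_coeff coeff_g1
    by (simp add: maxideal_def units_of_ring_def subring_def)
  moreover have "distinct_monomial_vals R g1"
    using distinct \<open>c \<noteq> 0\<close> val_eq_divide_cancel
    unfolding distinct_monomial_vals_def coeff_g1 by simp
  ultimately show ?thesis
    using that \<open>c \<in> V\<close> \<open>c \<noteq> 0\<close> by blast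
qed

end

locale pseudo_convergent_pair =
  ambient_valuation_ring R + s0: pseudo_convergent_seq R v0 + s1: pseudo_convergent_seq R v1
  for R :: "'k::field set" and v0 :: "'i0::wellorder \<Rightarrow> 'k" and v1 :: "'i1::wellorder \<Rightarrow> 'k" +
  fixes V :: "'k set"
  assumes subring: "subring V"
    and v0_mem: "\<And>j. v0 j \<in> V" and v1_mem: "\<And>j. v1 j \<in> V"
    and no_limit0: "\<And>w. w \<in> frac V \<Longrightarrow> \<not> pseudo_limit R v0 w"
    and no_limit1: "\<And>w. w \<in> frac V \<Longrightarrow> \<not> pseudo_limit R v1 w"
begin

lemma V_zero: "0 \<in> V" and V_one: "1 \<in> V"
  and V_add: "x \<in> V \<Longrightarrow> y \<in> V \<Longrightarrow> x + y \<in> V"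
  and V_diff: "x \<in> V \<Longrightarrow> y \<in> V \<Longrightarrow> x - y \<in> V"
  and V_mult: "x \<in> V \<Longrightarrow> y \<in> V \<Longrightarrow> x * y \<in> V"
  using subring unfolding subring_def by auto

lemma V_uminus: "x \<in> V \<Longrightarrow> - x \<in> V"
  using V_diff[OF V_zero] by fastforce

lemma gap_mem: "s0.gap j \<in> V" "s1.gap k \<in> V"
  using V_diff v0_mem v1_mem by auto

lemma divide_mem_frac: "x \<in> V \<Longrightarrow> y \<in> V \<Longrightarrow> y \<noteq> 0 \<Longrightarrow> x / y \<in> frac V"
  unfolding frac_def by blast

text \<open>In the notation of the paper: x = h(y_{0,j0}, y_{1,j1}) with h not yet normalized.\<close>
definition expands_beyond :: "'i0 \<Rightarrow> 'i1 \<Rightarrow> 'k \<Rightarrow> 'k \<Rightarrow> 'k \<Rightarrow> bool" where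
  "expands_beyond \<nu>0 \<nu>1 y z x \<longleftrightarrow>
     (\<exists>j0 j1 h. \<nu>0 < j0 \<and> \<nu>1 < j1 \<and> (\<forall>i j. coeff2 h i j \<in> V) \<and> (\<exists>i j. coeff2 h i j \<noteq> 0) \<and>
        distinct_monomial_vals R h \<and> x = eval2 h ((y - v0 j0) / s0.gap j0) ((z - v1 j1) / s1.gap j1))"

lemma expands_beyondI:
  assumes "\<nu>0 < j0" "\<nu>1 < j1" "A \<in> V" "B \<in> V" "C \<in> V" "D \<in> V" "E \<in> V"
    and "A \<noteq> 0 \<or> B \<noteq> 0 \<or> C \<noteq> 0 \<or> D \<noteq> 0 \<or> E \<noteq> 0"
    and "distinct_monomial_vals R (bipoly A B C D E)"
    and "x = eval2 (bipoly A B C D E) ((y - v0 j0) / s0.gap j0) ((z - v1 j1) / s1.gap j1)"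
  shows "expands_beyond \<nu>0 \<nu>1 y z x"
proof -
  have "\<forall>i j. coeff2 (bipoly A B C D E) i j \<in> V"
    using assms(3-7) V_zero by (simp add: coeff2_bipoly)
  moreover have "\<exists>i j. coeff2 (bipoly A B C D E) i j \<noteq> 0"
  proof -
    have "coeff2 (bipoly A B C D E) 0 0 = A" "coeff2 (bipoly A B C D E) 1 0 = B"
      "coeff2 (bipoly A B C D E) 0 1 = C" "coeff2 (bipoly A B C D E) 1 1 = D"
      "coeff2 (bipoly A B C D E) 2 0 = E"
      by (simp_all add: coeff2_bipoly)
    then show ?thesis using assms(8) by metis
  qed
  ultimately show ?thesis
    unfolding expands_beyond_def using assms(1,2,9,10) by blast
qed

lemma expands_beyond_zero: "expands_beyond \<nu>0 \<nu>1 y (y ^ 2) 0"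
proof -
  have "0 \<in> frac V" using divide_mem_frac[OF V_zero V_one] by simp
  then obtain m where m: "val_lt R (0 - v0 m) (s0.gap m)"
    using s0.exists_val_below_gap no_limit0 by blast
  obtain j0 where j0: "max \<nu>0 m < j0" "\<forall>x\<in>set [2 * v0 m]. \<not> val_eq R (s0.gap j0) x"
    using exists_index_avoiding_vals[where f = "\<lambda>j. s0.gap j", OF s0.no_max s0.val_gap_strict_mono] by blast
  define p q where "p = v0 j0" and "q = s0.gap j0"
  define B E where "B = 2 * p * q" and "E = q ^ 2"
  have "val_eq R (0 - p) (0 - v0 m)"
    unfolding p_def using s0.val_stable_beyond[OF m, of j0] j0(1) by (simp add: less_imp_le)
  then have "val_eq R (2 * p) (2 * v0 m)"
    using val_eq_mult_left by simp
  then have "\<not> val_eq R q (2 * p)"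
    using j0(2) val_eq_trans unfolding q_def by auto
  then have EB: "\<not> val_eq R E B"
    unfolding B_def E_def using val_eq_mult_cancel[of q q "2 * p"] s0.gap_nonzero
    by (simp add: q_def power2_eq_square mult.commute)
  obtain j1 where j1: "\<nu>1 < j1" "\<forall>x\<in>set [E, B]. \<not> val_eq R (s1.gap j1) x"
    using exists_index_avoiding_vals[where f = "\<lambda>j. s1.gap j", OF s1.no_max s1.val_gap_strict_mono] by blast
  define r t where "r = v1 j1" and "t = s1.gap j1"
  show ?thesis
  proof (rule expands_beyondI)
    show "\<nu>0 < j0" using j0(1) by simp
    show "\<nu>1 < j1" by (rule j1(1))
    show "p ^ 2 - r \<in> V" "B \<in> V" "- t \<in> V" "0 \<in> V" "E \<in> V"
      unfolding p_def q_def r_def t_def B_def E_def power2_eq_square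
      using V_add[OF V_one V_one] by (auto intro!: V_mult V_diff V_uminus V_zero gap_mem v0_mem v1_mem)
    show "p ^ 2 - r \<noteq> 0 \<or> B \<noteq> 0 \<or> - t \<noteq> 0 \<or> 0 \<noteq> 0 \<or> E \<noteq> 0"
      using s1.gap_nonzero[of j1] unfolding t_def by simp
    show "distinct_monomial_vals R (bipoly (p ^ 2 - r) B (- t) 0 E)"
      using EB j1(2) unfolding t_def[symmetric]
      by (intro distinct_monomial_vals_bipoly) (auto dest: val_eq_sym)
    show "0 = eval2 (bipoly (p ^ 2 - r) B (- t) 0 E) ((y - v0 j0) / s0.gap j0) ((y ^ 2 - v1 j1) / s1.gap j1)"
      unfolding B_def E_def p_def q_def r_def t_def
      by (rule eval2_substitute_square[OF s0.gap_nonzero s1.gap_nonzero, symmetric])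
  qed
qed

lemma expands_beyond_linear:
  assumes "a \<in> V" "b \<in> V" "c \<in> V" and "a \<noteq> 0 \<or> b \<noteq> 0 \<or> c \<noteq> 0"
  shows "expands_beyond \<nu>0 \<nu>1 y z (a + b * y + c * z)"
proof -
  define j1 where "j1 = succ_ord \<nu>1"
  define r t where "r = v1 j1" and "t = s1.gap j1"
  \<comment> \<open>for b = 0 the quotient is junk, but then there is nothing to avoid\<close>
  obtain j0 where j0: "\<nu>0 < j0" "\<forall>x\<in>set [c * t / b]. \<not> val_eq R (s0.gap j0) x"
    using exists_index_avoiding_vals[where f = "\<lambda>j. s0.gap j", OF s0.no_max s0.val_gap_strict_mono]
    by blast
  define p q where "p = v0 j0" and "q = s0.gap j0"
  have "\<not> val_eq R (b * q) (c * t)" if "b \<noteq> 0"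
    using j0(2) val_eq_mult_cancel[OF that, of q "c * t / b"] that unfolding q_def by simp
  show ?thesis
  proof (rule expands_beyondI)
    show "\<nu>0 < j0" by (rule j0(1))
    show "\<nu>1 < j1" unfolding j1_def by (rule succ_ord_gt[OF s1.no_max])
    show "a + b * p + c * r \<in> V" "b * q \<in> V" "c * t \<in> V" "0 \<in> V" "0 \<in> V"
      unfolding p_def q_def r_def t_def
      using assms(1-3) by (auto intro!: V_add V_mult V_zero gap_mem v0_mem v1_mem)
    show "a + b * p + c * r \<noteq> 0 \<or> b * q \<noteq> 0 \<or> c * t \<noteq> 0 \<or> (0::'k) \<noteq> 0 \<or> (0::'k) \<noteq> 0"
      using assms(4) s0.gap_nonzero[of j0] s1.gap_nonzero[of j1] unfolding q_def t_def by auto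
    show "distinct_monomial_vals R (bipoly (a + b * p + c * r) (b * q) (c * t) 0 0)"
      using \<open>b \<noteq> 0 \<Longrightarrow> \<not> val_eq R (b * q) (c * t)\<close> by (intro distinct_monomial_vals_bipoly) auto
    show "a + b * y + c * z =
      eval2 (bipoly (a + b * p + c * r) (b * q) (c * t) 0 0) ((y - v0 j0) / s0.gap j0) ((z - v1 j1) / s1.gap j1)"
      using eval2_substitute_bilinear[OF s0.gap_nonzero s1.gap_nonzero, where d = 0]
      unfolding p_def q_def r_def t_def by simp
  qed
qed

lemma expands_beyond_bilinear:
  assumes "a \<in> V" "b \<in> V" "c \<in> V" "d \<in> V" "d \<noteq> 0"
  shows "expands_beyond \<nu>0 \<nu>1 y z (a + b * y + c * z + d * y * z)"
proof -
  obtain m1 where m1: "val_lt R (- b / d - v1 m1) (s1.gap m1)"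
    using s1.exists_val_below_gap no_limit1 divide_mem_frac[OF V_uminus[OF assms(2)] assms(4,5)] by blast
  obtain m0 where m0: "val_lt R (- c / d - v0 m0) (s0.gap m0)"
    using s0.exists_val_below_gap no_limit0 divide_mem_frac[OF V_uminus[OF assms(3)] assms(4,5)] by blast
  define j1 where "j1 = succ_ord (max \<nu>1 m1)"
  have j1: "\<nu>1 < j1" "m1 \<le> j1"
    using succ_ord_gt[OF s1.no_max, of "max \<nu>1 m1"] unfolding j1_def by auto
  define r t where "r = v1 j1" and "t = s1.gap j1"
  define \<beta> where "\<beta> = b + d * r"
  obtain j0 where j0: "max \<nu>0 m0 < j0" "\<forall>x\<in>set [(c + d * v0 m0) * t / \<beta>]. \<not> val_eq R (s0.gap j0) x"
    using exists_index_avoiding_vals[where f = "\<lambda>j. s0.gap j", OF s0.no_max s0.val_gap_strict_mono]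
    by blast
  define p q where "p = v0 j0" and "q = s0.gap j0"
  have "q \<noteq> 0" "t \<noteq> 0" unfolding q_def t_def by (rule s0.gap_nonzero s1.gap_nonzero)+
  have "val_lt R \<beta> (d * t)"
    unfolding \<beta>_def r_def t_def using val_lt_affine[OF assms(5)] s1.val_stable_beyond[OF m1 j1(2)] by blast
  then have "val_lt R (q * \<beta>) (q * (d * t))"
    using val_lt_mult_cancel[OF \<open>q \<noteq> 0\<close>] by simp
  then have BD: "val_lt R (\<beta> * q) (d * q * t)"
    by (simp add: ac_simps)
  have stable0: "val_eq R (- c / d - p) (- c / d - v0 m0) \<and> val_lt R (- c / d - p) q"
    unfolding p_def q_def using s0.val_stable_beyond[OF m0, of j0] j0(1) by (simp add: less_imp_le)
  then have "val_lt R (c + d * p) (d * q)"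
    using val_lt_affine[OF assms(5)] by blast
  then have "val_lt R (t * (c + d * p)) (t * (d * q))"
    using val_lt_mult_cancel[OF \<open>t \<noteq> 0\<close>] by simp
  then have CD: "val_lt R ((c + d * p) * t) (d * q * t)"
    by (simp add: ac_simps)
  have "val_eq R (c + d * p) (c + d * v0 m0)"
    using stable0 val_eq_affine[OF assms(5)] by blast
  from val_eq_mult_left[OF this, of t]
  have C_stable: "val_eq R ((c + d * p) * t) ((c + d * v0 m0) * t)"
    by (simp add: ac_simps)
  have BC: "\<not> val_eq R (\<beta> * q) ((c + d * p) * t)" if "\<beta> \<noteq> 0"
  proof
    assume "val_eq R (\<beta> * q) ((c + d * p) * t)"
    with C_stable have "val_eq R (\<beta> * q) ((c + d * v0 m0) * t)"
      using val_eq_trans by blast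
    then show False
      using j0(2) val_eq_mult_cancel[OF that, of q "(c + d * v0 m0) * t / \<beta>"] that
      unfolding q_def by simp
  qed
  show ?thesis
  proof (rule expands_beyondI)
    show "\<nu>0 < j0" using j0(1) by simp
    show "\<nu>1 < j1" by (rule j1(1))
    show "a + b * p + c * r + d * p * r \<in> V" "\<beta> * q \<in> V" "(c + d * p) * t \<in> V" "d * q * t \<in> V" "0 \<in> V"
      unfolding \<beta>_def p_def q_def r_def t_def
      using assms(1-4) by (auto intro!: V_add V_mult V_zero gap_mem v0_mem v1_mem)
    show "a + b * p + c * r + d * p * r \<noteq> 0 \<or> \<beta> * q \<noteq> 0 \<or> (c + d * p) * t \<noteq> 0 \<or> d * q * t \<noteq> 0 \<or> (0::'k) \<noteq> 0"
      using assms(5) \<open>q \<noteq> 0\<close> \<open>t \<noteq> 0\<close> by simp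
    show "distinct_monomial_vals R (bipoly (a + b * p + c * r + d * p * r) (\<beta> * q) ((c + d * p) * t) (d * q * t) 0)"
      using BC BD CD val_lt_imp_not_eq by (intro distinct_monomial_vals_bipoly) auto
    show "a + b * y + c * z + d * y * z =
      eval2 (bipoly (a + b * p + c * r + d * p * r) (\<beta> * q) ((c + d * p) * t) (d * q * t) 0)
        ((y - v0 j0) / s0.gap j0) ((z - v1 j1) / s1.gap j1)"
      unfolding \<beta>_def p_def q_def r_def t_def
      by (rule eval2_substitute_bilinear[OF s0.gap_nonzero s1.gap_nonzero])
  qed
qed

lemma expands_beyond_bidegree_le_1:
  assumes "a \<in> V" "b \<in> V" "c \<in> V" "d \<in> V"
  shows "expands_beyond \<nu>0 \<nu>1 y (y ^ 2) (a + b * y + c * y ^ 2 + d * y * y ^ 2)"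
proof -
  consider "a = 0" "b = 0" "c = 0" "d = 0" | "d = 0" "a \<noteq> 0 \<or> b \<noteq> 0 \<or> c \<noteq> 0" | "d \<noteq> 0"
    by blast
  then show ?thesis
  proof cases
    case 1
    then show ?thesis using expands_beyond_zero by simp
  next
    case 2
    then show ?thesis using expands_beyond_linear[OF assms(1-3)] by simp
  next
    case 3
    then show ?thesis using expands_beyond_bilinear[OF assms] by simp
  qed
qed

lemma exists_normalized_expansion:
  assumes "R \<inter> frac V = V"
    and g: "\<forall>i j. coeff2 g i j \<in> V" "degree g \<le> 1" "\<forall>j. degree (coeff g j) \<le> 1"
  shows "\<exists>j0 j1 c g1. \<nu>0 < j0 \<and> \<nu>1 < j1 \<and> c \<in> V \<and> c \<noteq> 0 \<and> (\<forall>i j. coeff2 g1 i j \<in> V) \<and>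
    eval2 g y (y ^ 2) = c * eval2 g1 ((y - v0 j0) / s0.gap j0) ((y ^ 2 - v1 j1) / s1.gap j1) \<and>
    (\<exists>i j. coeff2 g1 i j \<notin> maxideal V) \<and> distinct_monomial_vals R g1"
proof -
  obtain a b c d where abcd: "a \<in> V" "b \<in> V" "c \<in> V" "d \<in> V" and "g = bipoly a b c d 0"
    using bipoly_if_bidegree_le_1 g by blast
  then have "eval2 g y (y ^ 2) = a + b * y + c * y ^ 2 + d * y * y ^ 2"
    by (simp add: eval2_bipoly)
  then have "expands_beyond \<nu>0 \<nu>1 y (y ^ 2) (eval2 g y (y ^ 2))"
    using expands_beyond_bidegree_le_1[OF abcd] by simp
  then obtain j0 j1 h i' j' where j: "\<nu>0 < j0" "\<nu>1 < j1"
    and h: "\<forall>i j. coeff2 h i j \<in> V" "coeff2 h i' j' \<noteq> 0" "distinct_monomial_vals R h"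
    and eval_h: "eval2 g y (y ^ 2) = eval2 h ((y - v0 j0) / s0.gap j0) ((y ^ 2 - v1 j1) / s1.gap j1)"
    unfolding expands_beyond_def by (elim exE conjE) (rule that; assumption)
  obtain u g1 where g1: "u \<in> V" "u \<noteq> 0" "\<forall>i j. coeff2 g1 i j \<in> V"
    and "h = smult [:u:] g1"
    and g1': "\<exists>i j. coeff2 g1 i j \<notin> maxideal V" "distinct_monomial_vals R g1"
    by (rule normalize_by_min_coeff[OF subring assms(1) h])
  then have "eval2 g y (y ^ 2) = u * eval2 g1 ((y - v0 j0) / s0.gap j0) ((y ^ 2 - v1 j1) / s1.gap j1)"
    using eval_h by (simp add: eval2_smult_const)
  then show ?thesis
    using j g1 g1' by blast
qed

end

theorem lemma1p4:
  fixes V V' :: "'k::field set" and y0 :: 'k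
    and v0 :: "'i0::wellorder \<Rightarrow> 'k" and v1 :: "'i1::wellorder \<Rightarrow> 'k"
  assumes V'_val: "valuation_ring_in V' UNIV"
    and V_val: "valuation_ring_in V (frac V)"
    and sub: "V \<subseteq> V'"
    and dom: "V' \<inter> frac V = V"
    and imm: "immediate_ext V V'"
    and y0: "y0 \<in> V'"
    and gen: "gen_field (frac V \<union> {y0}) = UNIV"
    and lim0: "no_max TYPE('i0)" and lim1: "no_max TYPE('i1)"
    and v0V: "range v0 \<subseteq> V" and pc0: "pseudo_convergent V' v0"
    and pl0: "pseudo_limit V' v0 y0"
    and nl0: "\<not> (\<exists>w\<in>frac V. pseudo_limit V' v0 w)"
    and v1V: "range v1 \<subseteq> V" and pc1: "pseudo_convergent V' v1"
    and pl1: "pseudo_limit V' v1 (y0^2)"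
    and nl1: "\<not> (\<exists>w\<in>frac V. pseudo_limit V' v1 w)"
  shows "\<forall>g \<nu>0 \<nu>1. (\<forall>i j. coeff2 g i j \<in> V) \<and> degree g \<le> 1 \<and> (\<forall>j. degree (coeff g j) \<le> 1)
     \<longrightarrow> (\<exists>j0 j1 c g1.
            \<nu>0 < j0 \<and> \<nu>1 < j1 \<and> c \<in> V \<and> c \<noteq> 0 \<and> (\<forall>i j. coeff2 g1 i j \<in> V) \<and>
            eval2 g y0 (y0^2) =
              c * eval2 g1 ((y0 - v0 j0) / (v0 (succ_ord j0) - v0 j0))
                           ((y0^2 - v1 j1) / (v1 (succ_ord j1) - v1 j1)) \<and>
            (\<exists>i j. coeff2 g1 i j \<notin> maxideal V) \<and>
            (\<forall>i j i' j'. (i, j) \<noteq> (0, 0) \<and> (i', j') \<noteq> (0, 0) \<and> (i, j) \<noteq> (i', j') \<and>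
                 coeff2 g1 i j \<noteq> 0 \<and> coeff2 g1 i' j' \<noteq> 0
                 \<longrightarrow> \<not> val_eq V' (coeff2 g1 i j) (coeff2 g1 i' j')))"
proof -
  have "subring V" using V_val by (simp add: valuation_ring_in_def)
  interpret pseudo_convergent_pair V' v0 v1 V
    using V'_val lim0 lim1 pc0 pc1 \<open>subring V\<close> v0V v1V nl0 nl1
    by unfold_locales (assumption | blast)+
  show ?thesis
    using exists_normalized_expansion[OF dom] unfolding distinct_monomial_vals_def by blast
qed

end
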